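(* Let $X$ be a real lush Banach space. Then $n_L(X)=1$.
   Context: A real Banach space $X$ is lush if for every $x,y\in S_X$ and every $\varepsilon>0$ there is $y^*\in S_{X^*}$ such that, with the slice $S=S(y^*,\varepsilon)=\{z\in B_X: y^*(z)>1-\varepsilon\}$, one has $y\in S$ and $\mathrm{dist}(x,\mathrm{aco}(S))<\varepsilon$, where $\mathrm{aco}(S)$ is the absolutely convex hull of $S$. $\mathrm{Lip}_0(X)$ is the set of Lipschitz maps $T:X\to X$ with $T(0)=0$, with $\|T\|_L=\sup\{\|Tx-Ty\|/\|x-y\|: x\neq y\}$. $D(x)=\{x^*\in X^*: x^*(x)=\|x^*\|\|x\|=\|x\|^2\}$; $\omega(T)=\sup\{|f(Tx-Ty)|/\|x-y\|^2: x\neq y,\ f\in D(x-y)\}$; $n_L(X)=\inf\{\omega(T): T\in\mathrm{Lip}_0(X),\ \|T\|_L=1\}$. *)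

theory Defs
  imports "HOL-Analysis.Analysis"
begin

definition dual_sphere :: "('a::real_normed_vector \<Rightarrow> real) set" where
  "dual_sphere = {f. bounded_linear f \<and> onorm f = 1}"

definition slice :: "('a::real_normed_vector \<Rightarrow> real) \<Rightarrow> real \<Rightarrow> 'a set" where
  "slice f eps = {z. z \<in> cball 0 1 \<and> f z > 1 - eps}"

definition aco :: "'a::real_vector set \<Rightarrow> 'a set" where
  "aco S = convex hull (S \<union> uminus ` S)"

definition lush :: "'a::real_normed_vector itself \<Rightarrow> bool" where
  "lush _ \<longleftrightarrow> (\<forall>x::'a. \<forall>y::'a. \<forall>eps::real.
      x \<in> sphere 0 1 \<longrightarrow> y \<in> sphere 0 1 \<longrightarrow> eps > 0 \<longrightarrow>
      (\<exists>f\<in>dual_sphere. y \<in> slice f eps \<and> infdist x (aco (slice f eps)) < eps))"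

definition duality_set :: "'a::real_normed_vector \<Rightarrow> ('a \<Rightarrow> real) set" where
  "duality_set x = {f. bounded_linear f \<and> f x = onorm f * norm x \<and> onorm f * norm x = (norm x)\<^sup>2}"

definition Lip0 :: "('a::real_normed_vector \<Rightarrow> 'a) set" where
  "Lip0 = {T. T 0 = 0 \<and> (\<exists>L. lipschitz_on L UNIV T)}"

definition lip_norm :: "('a::real_normed_vector \<Rightarrow> 'a) \<Rightarrow> real" where
  "lip_norm T = Sup {norm (T x - T y) / norm (x - y) | x y. x \<noteq> y}"

definition num_radius_L :: "('a::real_normed_vector \<Rightarrow> 'a) \<Rightarrow> real" where
  "num_radius_L T = Sup {\<bar>f (T x - T y)\<bar> / (norm (x - y))\<^sup>2 | x y f. x \<noteq> y \<and> f \<in> duality_set (x - y)}"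

definition lip_num_index :: "'a::real_normed_vector itself \<Rightarrow> real" where
  "lip_num_index _ = Inf {num_radius_L T | T :: 'a \<Rightarrow> 'a. T \<in> Lip0 \<and> lip_norm T = 1}"

end

theory Submission
  imports Defs
begin

(*
  Let X be a nontrivial real lush Banach space and T : X \<rightarrow> X Lipschitz with T 0 = 0 and
  Lipschitz constant 1; write \<omega> for its Lipschitz numerical radius.

  1. A Hahn-Banach theorem for norming functionals (via Zorn's lemma on graphs of
     norm-dominated partial functionals) yields nonempty duality sets D(u).
  2. Elementary facts: T is nonexpansive, its Lipschitz norm is almost attained,
     0 \<le> \<omega> \<le> 1, and (1 - |s| \<omega>) \<parallel>u\<parallel> \<le> \<parallel>u - s (T p - T q)\<parallel> for u = p - q.
  3. Lushness turns an almost-norming pair x, y into a direction z of a slice on which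
     some increment of T is almost normed by the slice functional f.
  4. Solving d' = d + s (T (q + d') - T q) by Banach's fixed point theorem and comparing
     f d' with \<parallel>d'\<parallel> gives (1 - t \<omega>)((1 - e) + t (1 - 3e)) \<le> 1 + t\<^sup>2 for small t, e > 0,
     which is impossible when \<omega> < 1 (take t = (1 - \<omega>)/4, e = t\<^sup>2/8).
*)

section \<open>A Hahn-Banach theorem for norming functionals\<close>

text \<open>A norming graph for u is the graph of a linear functional on a linear subspace,
  dominated by the norm and taking the value \<parallel>u\<parallel> at u.\<close>
definition norming_graph :: "'a::real_normed_vector \<Rightarrow> ('a \<times> real) set \<Rightarrow> bool" where
  "norming_graph u G \<longleftrightarrow>
     (\<forall>x a b. (x, a) \<in> G \<longrightarrow> (x, b) \<in> G \<longrightarrow> a = b) \<and>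
     (\<forall>x a y b. (x, a) \<in> G \<longrightarrow> (y, b) \<in> G \<longrightarrow> (x + y, a + b) \<in> G) \<and>
     (\<forall>x a c. (x, a) \<in> G \<longrightarrow> (c *\<^sub>R x, c * a) \<in> G) \<and>
     (\<forall>x a. (x, a) \<in> G \<longrightarrow> a \<le> norm x) \<and>
     (u, norm u) \<in> G"

lemma norming_graphD:
  assumes "norming_graph u G"
  shows "\<And>x a b. (x, a) \<in> G \<Longrightarrow> (x, b) \<in> G \<Longrightarrow> a = b"
    and "\<And>x a y b. (x, a) \<in> G \<Longrightarrow> (y, b) \<in> G \<Longrightarrow> (x + y, a + b) \<in> G"
    and "\<And>x a c. (x, a) \<in> G \<Longrightarrow> (c *\<^sub>R x, c * a) \<in> G"
    and "\<And>x a. (x, a) \<in> G \<Longrightarrow> a \<le> norm x"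
    and "(u, norm u) \<in> G"
  using assms unfolding norming_graph_def by blast+

lemma norming_graph_line:
  fixes u :: "'a::real_normed_vector"
  assumes "u \<noteq> 0"
  shows "norming_graph u {(c *\<^sub>R u, c * norm u) | c. True}"
  unfolding norming_graph_def
proof (intro conjI allI impI)
  fix x a b
  assume "(x, a) \<in> {(c *\<^sub>R u, c * norm u) | c. True}" "(x, b) \<in> {(c *\<^sub>R u, c * norm u) | c. True}"
  then obtain c d where h: "x = c *\<^sub>R u" "a = c * norm u" "x = d *\<^sub>R u" "b = d * norm u" by blast
  then have "c = d" using assms by (metis scaleR_cancel_right)
  then show "a = b" using h by simp
qed (force intro: exI[of _ 1] exI[of _ "_ + _"] exI[of _ "_ * _"]
       simp: algebra_simps scaleR_add_left mult_right_mono)+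

lemma norming_graph_chain_Union:
  assumes C: "C \<in> chains {G. norming_graph u G}" and ne: "C \<noteq> {}"
  shows "norming_graph u (\<Union>C)"
proof -
  have graph: "\<And>G. G \<in> C \<Longrightarrow> norming_graph u G" using C by (auto dest: chainsD2)
  have common: "\<exists>G\<in>C. p \<in> G \<and> q \<in> G" if pq: "p \<in> \<Union>C" "q \<in> \<Union>C" for p q
  proof -
    obtain G1 G2 where "G1 \<in> C" "G2 \<in> C" "p \<in> G1" "q \<in> G2" using pq by auto
    then show ?thesis using chainsD[OF C \<open>G1 \<in> C\<close> \<open>G2 \<in> C\<close>] by blast
  qed
  show ?thesis unfolding norming_graph_def
  proof (intro conjI allI impI)
    fix x a b assume "(x, a) \<in> \<Union>C" "(x, b) \<in> \<Union>C"
    then obtain G where "G \<in> C" "(x, a) \<in> G" "(x, b) \<in> G" using common by blast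
    then show "a = b" using norming_graphD(1)[OF graph] by blast
  next
    fix x a y b assume "(x, a) \<in> \<Union>C" "(y, b) \<in> \<Union>C"
    then obtain G where "G \<in> C" "(x, a) \<in> G" "(y, b) \<in> G" using common by blast
    then show "(x + y, a + b) \<in> \<Union>C" using norming_graphD(2)[OF graph] by blast
  next
    fix x a c assume "(x, a) \<in> \<Union>C"
    then show "(c *\<^sub>R x, c * a) \<in> \<Union>C" using norming_graphD(3)[OF graph] by blast
  next
    fix x a assume "(x, a) \<in> \<Union>C"
    then show "a \<le> norm x" using norming_graphD(4)[OF graph] by blast
  next
    obtain G where "G \<in> C" using ne by blast
    then show "(u, norm u) \<in> \<Union>C" using norming_graphD(5)[OF graph] by blast
  qed
qed

text \<open>The one-dimensional extension step: for w outside the domain of G, the value k at w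
  must lie between a - \<parallel>x - w\<parallel> and \<parallel>y + w\<parallel> - b for all (x, a), (y, b) in G; such a k
  exists because a + b \<le> \<parallel>x + y\<parallel> \<le> \<parallel>x - w\<parallel> + \<parallel>y + w\<parallel>.\<close>
lemma norming_graph_extension_value:
  assumes G: "norming_graph u G"
  obtains k where "\<And>x a. (x, a) \<in> G \<Longrightarrow> a - norm (x - w) \<le> k"
    and "\<And>y b. (y, b) \<in> G \<Longrightarrow> k \<le> norm (y + w) - b"
proof -
  have separated: "a - norm (x - w) \<le> norm (y + w) - b" if "(x, a) \<in> G" "(y, b) \<in> G" for x a y b
  proof -
    have "a + b \<le> norm (x + y)" using that norming_graphD(2,4)[OF G] by blast
    also have "norm (x + y) \<le> norm (x - w) + norm (y + w)"
      using norm_triangle_ineq[of "x - w" "y + w"] by simp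
    finally show ?thesis by simp
  qed
  define K where "K = {a - norm (x - w) | x a. (x, a) \<in> G}"
  have zero: "(0, 0) \<in> G" using norming_graphD(3)[OF G norming_graphD(5)[OF G], of 0] by simp
  have "K \<noteq> {}" using zero unfolding K_def by blast
  moreover have "bdd_above K" unfolding K_def bdd_above_def using separated[OF _ zero] by auto
  ultimately show ?thesis
  proof (intro that[of "Sup K"])
    show "a - norm (x - w) \<le> Sup K" if "(x, a) \<in> G" for x a
      using \<open>bdd_above K\<close> that by (intro cSup_upper) (auto simp: K_def)
    show "Sup K \<le> norm (y + w) - b" if "(y, b) \<in> G" for y b
      using \<open>K \<noteq> {}\<close> separated that by (intro cSup_least) (auto simp: K_def)
  qed
qed

text \<open>With k as above, the extension x + c w \<mapsto> a + c k stays dominated by the norm: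
  rescale by 1/|c| and use the bound on the appropriate side.\<close>
lemma extension_dominated:
  assumes G: "norming_graph u G" and xa: "(x, a) \<in> G"
    and lower: "\<And>x a. (x, a) \<in> G \<Longrightarrow> a - norm (x - w) \<le> k"
    and upper: "\<And>y b. (y, b) \<in> G \<Longrightarrow> k \<le> norm (y + w) - b"
  shows "a + c * k \<le> norm (x + c *\<^sub>R w)"
proof -
  consider "c = 0" | "c > 0" | "c < 0" by linarith
  then show ?thesis
  proof cases
    case 1
    then show ?thesis using norming_graphD(4)[OF G xa] by simp
  next
    case 2
    have "k \<le> norm ((1/c) *\<^sub>R x + w) - (1/c) * a"
      using upper[OF norming_graphD(3)[OF G xa, of "1/c"]] .
    then have "c * k \<le> c * (norm ((1/c) *\<^sub>R x + w) - (1/c) * a)"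
      using 2 by (simp add: mult_left_mono)
    also have "\<dots> = c * norm ((1/c) *\<^sub>R x + w) - a"
      using 2 by (simp add: right_diff_distrib)
    also have "c * norm ((1/c) *\<^sub>R x + w) = norm (c *\<^sub>R ((1/c) *\<^sub>R x + w))"
      using 2 by simp
    also have "c *\<^sub>R ((1/c) *\<^sub>R x + w) = x + c *\<^sub>R w"
      using 2 by (simp add: scaleR_add_right)
    finally show ?thesis by simp
  next
    case 3
    define d where "d = - c"
    have d: "d > 0" using 3 d_def by simp
    have "(1/d) * a - norm ((1/d) *\<^sub>R x - w) \<le> k"
      using lower[OF norming_graphD(3)[OF G xa, of "1/d"]] .
    then have "d * ((1/d) * a - norm ((1/d) *\<^sub>R x - w)) \<le> d * k"
      using d by (simp add: mult_left_mono)
    then have "a - d * norm ((1/d) *\<^sub>R x - w) \<le> d * k"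
      using d by (simp add: right_diff_distrib)
    also have "d * norm ((1/d) *\<^sub>R x - w) = norm (d *\<^sub>R ((1/d) *\<^sub>R x - w))"
      using d by simp
    also have "d *\<^sub>R ((1/d) *\<^sub>R x - w) = x + c *\<^sub>R w"
      using d by (simp add: d_def scaleR_diff_right)
    finally show ?thesis by (simp add: d_def)
  qed
qed

text \<open>If w lies outside the domain of G, then every vector x + c w with x in the domain
  determines its coefficient c; otherwise w would be a multiple of a domain vector.\<close>
lemma norming_graph_coefficient_unique:
  assumes G: "norming_graph u G" and w: "\<forall>a. (w, a) \<notin> G"
    and xa: "(x, a) \<in> G" and xa': "(x', a') \<in> G" and eq: "x + c *\<^sub>R w = x' + c' *\<^sub>R w"
  shows "c = c'"
proof (rule ccontr)
  assume "c \<noteq> c'"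
  have "(x + (-1) *\<^sub>R x', a + (-1) * a') \<in> G"
    using norming_graphD(2,3)[OF G] xa xa' by blast
  then have "((1 / (c' - c)) *\<^sub>R (x - x'), (1 / (c' - c)) * (a - a')) \<in> G"
    using norming_graphD(3)[OF G] by (simp only: scaleR_minus1_left mult_minus1 diff_conv_add_uminus[symmetric])
  moreover have "(1 / (c' - c)) *\<^sub>R (x - x') = w"
  proof -
    have "x - x' = (c' - c) *\<^sub>R w" using eq by (simp add: algebra_simps)
    then show ?thesis using \<open>c \<noteq> c'\<close> by simp
  qed
  ultimately show False using w by metis
qed

lemma norming_graph_extend:
  fixes u w :: "'a::real_normed_vector"
  assumes G: "norming_graph u G" and w: "\<forall>a. (w, a) \<notin> G"
  shows "\<exists>G'. norming_graph u G' \<and> G \<subseteq> G' \<and> G' \<noteq> G"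
proof -
  obtain k where lower: "\<And>x a. (x, a) \<in> G \<Longrightarrow> a - norm (x - w) \<le> k"
    and upper: "\<And>y b. (y, b) \<in> G \<Longrightarrow> k \<le> norm (y + w) - b"
    using norming_graph_extension_value[OF G] by metis
  note fn = norming_graphD(1)[OF G] and add = norming_graphD(2)[OF G]
    and sc = norming_graphD(3)[OF G] and uG = norming_graphD(5)[OF G]
  define G' where "G' = {(x + c *\<^sub>R w, a + c * k) | x a c. (x, a) \<in> G}"
  have "norming_graph u G'" unfolding norming_graph_def
  proof (intro conjI allI impI)
    fix z p q assume "(z, p) \<in> G'" "(z, q) \<in> G'"
    then obtain x a c x' a' c' where h: "(x, a) \<in> G" "(x', a') \<in> G" "z = x + c *\<^sub>R w"
      "p = a + c * k" "z = x' + c' *\<^sub>R w" "q = a' + c' * k" unfolding G'_def by blast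
    have "c = c'" using norming_graph_coefficient_unique[OF G w h(1,2)] h(3,5) by simp
    then show "p = q" using h fn by simp
  next
    fix z p z' q assume "(z, p) \<in> G'" "(z', q) \<in> G'"
    then obtain x a c x' a' c' where h: "(x, a) \<in> G" "(x', a') \<in> G" "z = x + c *\<^sub>R w"
      "p = a + c * k" "z' = x' + c' *\<^sub>R w" "q = a' + c' * k" unfolding G'_def by blast
    have "z + z' = (x + x') + (c + c') *\<^sub>R w" "p + q = (a + a') + (c + c') * k"
      using h by (simp_all add: algebra_simps)
    then show "(z + z', p + q) \<in> G'" unfolding G'_def using add[OF h(1,2)] by blast
  next
    fix z p e assume "(z, p) \<in> G'"
    then obtain x a c where h: "(x, a) \<in> G" "z = x + c *\<^sub>R w" "p = a + c * k"
      unfolding G'_def by blast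
    have "e *\<^sub>R z = e *\<^sub>R x + (e * c) *\<^sub>R w" "e * p = e * a + (e * c) * k"
      using h by (simp_all add: algebra_simps)
    then show "(e *\<^sub>R z, e * p) \<in> G'" unfolding G'_def using sc[OF h(1)] by blast
  next
    fix z p assume "(z, p) \<in> G'"
    then show "p \<le> norm z"
      unfolding G'_def using extension_dominated[OF G _ lower upper] by blast
  next
    show "(u, norm u) \<in> G'" unfolding G'_def using uG by force
  qed
  moreover have "G \<subseteq> G'" unfolding G'_def by force
  moreover have "(w, k) \<in> G'" unfolding G'_def using sc[OF uG, of 0] by force
  ultimately show ?thesis using w by blast
qed

lemma total_norming_graph:
  fixes u :: "'a::real_normed_vector"
  assumes "u \<noteq> 0"
  obtains M where "norming_graph u M" and "\<And>x. \<exists>a. (x, a) \<in> M"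
proof -
  have "\<exists>M\<in>{G. norming_graph u G}. \<forall>X\<in>{G. norming_graph u G}. M \<subseteq> X \<longrightarrow> X = M"
  proof (rule Zorn_Lemma2, intro ballI)
    fix C assume C: "C \<in> chains {G. norming_graph u G}"
    show "\<exists>U\<in>{G. norming_graph u G}. \<forall>X\<in>C. X \<subseteq> U"
    proof (cases "C = {}")
      case True
      then show ?thesis using norming_graph_line[OF assms] by blast
    next
      case False
      then show ?thesis using norming_graph_chain_Union[OF C False] by blast
    qed
  qed
  then obtain M where M: "norming_graph u M"
    and maximal: "\<And>X. norming_graph u X \<Longrightarrow> M \<subseteq> X \<Longrightarrow> X = M" by blast
  have "\<exists>a. (x, a) \<in> M" for x
    using norming_graph_extend[OF M] maximal by blast
  then show ?thesis using that M by blast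
qed

lemma hahn_banach_norming:
  fixes u :: "'a::real_normed_vector"
  assumes "u \<noteq> 0"
  obtains f where "bounded_linear f" "onorm f = 1" "f u = norm u"
proof -
  obtain M where M: "norming_graph u M" and total: "\<And>x. \<exists>a. (x, a) \<in> M"
    using total_norming_graph[OF assms] by blast
  define f where "f x = (THE a. (x, a) \<in> M)" for x
  have f_eq: "f x = a" if "(x, a) \<in> M" for x a
    unfolding f_def using that norming_graphD(1)[OF M] by blast
  have graph: "(x, f x) \<in> M" for x
    using total[of x] f_eq by blast
  have add: "f (x + y) = f x + f y" for x y
    using f_eq norming_graphD(2)[OF M graph graph] by blast
  have scale: "f (c *\<^sub>R x) = c *\<^sub>R f x" for c x
    using f_eq norming_graphD(3)[OF M graph] by fastforce
  have bound: "norm (f x) \<le> norm x * 1" for x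
  proof -
    have "f x \<le> norm x" using norming_graphD(4)[OF M graph] .
    moreover have "- f x \<le> norm x"
      using norming_graphD(4)[OF M graph[of "-x"]] scale[of "-1" x] by simp
    ultimately show ?thesis by simp
  qed
  have bl: "bounded_linear f" by (rule bounded_linear_intro[OF add scale bound])
  have fu: "f u = norm u" using f_eq norming_graphD(5)[OF M] by blast
  have "onorm f \<le> 1" by (rule onorm_bound) (use bound in auto)
  moreover have "norm (f u) / norm u \<le> onorm f" by (rule le_onorm[OF bl])
  then have "1 \<le> onorm f" using fu assms by simp
  ultimately show ?thesis using that bl fu by auto
qed

lemma duality_set_nonempty:
  fixes u :: "'a::real_normed_vector"
  assumes "u \<noteq> 0"
  obtains f where "f \<in> duality_set u"
proof -
  obtain g where g: "bounded_linear g" "onorm g = 1" "g u = norm u"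
    using hahn_banach_norming[OF assms] by blast
  define f where "f x = norm u *\<^sub>R g x" for x
  have bl: "bounded_linear f"
    unfolding f_def by (rule bounded_linear_compose[OF bounded_linear_scaleR_right g(1)])
  have "onorm f = norm u" unfolding f_def using onorm_scaleR[OF g(1), of "norm u"] g(2) by simp
  moreover have "f u = norm u * norm u" unfolding f_def using g(3) by simp
  ultimately have "f \<in> duality_set u" using bl unfolding duality_set_def by (simp add: power2_eq_square)
  then show ?thesis using that by blast
qed

lemma duality_setD:
  fixes u :: "'a::real_normed_vector"
  assumes "f \<in> duality_set u" "u \<noteq> 0"
  shows "bounded_linear f" "onorm f = norm u" "f u = (norm u)\<^sup>2"
proof -
  show "bounded_linear f" using assms unfolding duality_set_def by simp
  have "onorm f * norm u = norm u * norm u"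
    using assms unfolding duality_set_def by (simp add: power2_eq_square)
  then show "onorm f = norm u" using assms(2) by simp
  show "f u = (norm u)\<^sup>2" using assms unfolding duality_set_def by simp
qed

section \<open>Lipschitz maps of norm one and their numerical radius\<close>

lemma lip_norm_one_nonexpansive:
  fixes T :: "'a::real_normed_vector \<Rightarrow> 'a"
  assumes "T \<in> Lip0" "lip_norm T = 1"
  shows "norm (T x - T y) \<le> norm (x - y)"
proof (cases "x = y")
  case False
  obtain L where L: "lipschitz_on L UNIV T" using assms unfolding Lip0_def by blast
  have "bdd_above {norm (T x - T y) / norm (x - y) | x y. x \<noteq> y}"
    unfolding bdd_above_def
  proof (intro exI[of _ L] ballI, elim CollectE exE conjE)
    fix r and a b :: 'a assume "r = norm (T a - T b) / norm (a - b)" "a \<noteq> b"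
    have "norm (T a - T b) \<le> L * norm (a - b)"
      using lipschitz_onD[OF L, of a b] by (simp add: dist_norm)
    then show "r \<le> L" using \<open>r = _\<close> \<open>a \<noteq> b\<close> by (simp add: divide_le_eq)
  qed
  then have "norm (T x - T y) / norm (x - y) \<le> lip_norm T"
    unfolding lip_norm_def by (rule cSup_upper[rotated]) (use False in blast)
  then show ?thesis using assms False by (simp add: divide_le_eq)
qed simp

lemma lip_norm_one_almost_attained:
  fixes T :: "'a::real_normed_vector \<Rightarrow> 'a"
  assumes "lip_norm T = 1" "\<exists>x::'a. x \<noteq> 0" "e > 0"
  obtains x y where "x \<noteq> y" "(1 - e) * norm (x - y) < norm (T x - T y)"
proof -
  obtain x0 :: 'a where "x0 \<noteq> 0" using assms by blast
  then have ne: "{norm (T x - T y) / norm (x - y) | x y. x \<noteq> y} \<noteq> {}" by blast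
  have "1 - e < Sup {norm (T x - T y) / norm (x - y) | x y. x \<noteq> y}"
    using assms unfolding lip_norm_def by simp
  then obtain r where "r \<in> {norm (T x - T y) / norm (x - y) | x y. x \<noteq> y}" "1 - e < r"
    using less_cSupE[OF _ ne] by blast
  then obtain x y where "x \<noteq> y" "1 - e < norm (T x - T y) / norm (x - y)" by blast
  then show ?thesis using that by (simp add: less_divide_eq)
qed

text \<open>For a nonexpansive T the quotients defining the numerical radius lie in [0, 1];
  on a nontrivial space there is at least one of them.\<close>
lemma num_radius_L_basic:
  fixes T :: "'a::real_normed_vector \<Rightarrow> 'a"
  assumes nonexp: "\<And>x y. norm (T x - T y) \<le> norm (x - y)" and nt: "\<exists>x::'a. x \<noteq> 0"
  shows num_radius_L_le_1: "num_radius_L T \<le> 1"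
    and num_radius_L_nonneg: "0 \<le> num_radius_L T"
    and num_radius_L_bound: "\<And>(x::'a) y f. x \<noteq> y \<Longrightarrow> f \<in> duality_set (x - y) \<Longrightarrow>
          \<bar>f (T x - T y)\<bar> \<le> num_radius_L T * (norm (x - y))\<^sup>2"
proof -
  define W where "W = {\<bar>f (T x - T y)\<bar> / (norm (x - y))\<^sup>2 | x y f. x \<noteq> y \<and> f \<in> duality_set (x - y)}"
  have radius: "num_radius_L T = Sup W" unfolding W_def num_radius_L_def ..
  have le1: "r \<le> 1" if "r \<in> W" for r
  proof -
    obtain x y f where h: "r = \<bar>f (T x - T y)\<bar> / (norm (x - y))\<^sup>2" "x \<noteq> y" "f \<in> duality_set (x - y)"
      using \<open>r \<in> W\<close> unfolding W_def by blast
    have u: "x - y \<noteq> 0" using h by simp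
    have "\<bar>f (T x - T y)\<bar> \<le> onorm f * norm (T x - T y)"
      using onorm[OF duality_setD(1)[OF h(3) u]] by simp
    also have "\<dots> \<le> norm (x - y) * norm (x - y)"
      using duality_setD(2)[OF h(3) u] nonexp[of x y] by (simp add: mult_left_mono)
    finally show "r \<le> 1" using h u by (simp add: power2_eq_square divide_le_eq)
  qed
  have bdd: "bdd_above W" using le1 unfolding bdd_above_def by blast
  obtain x0 :: 'a where x0: "x0 \<noteq> 0" using nt by blast
  obtain f0 where f0: "f0 \<in> duality_set x0" using duality_set_nonempty[OF x0] by blast
  have mem: "\<bar>f0 (T x0 - T 0)\<bar> / (norm (x0 - 0))\<^sup>2 \<in> W" unfolding W_def using x0 f0 by force
  show "num_radius_L T \<le> 1" unfolding radius using mem le1 by (intro cSup_least) auto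
  have "0 \<le> \<bar>f0 (T x0 - T 0)\<bar> / (norm (x0 - 0))\<^sup>2" by simp
  also have "\<dots> \<le> Sup W" by (rule cSup_upper[OF mem bdd])
  finally show "0 \<le> num_radius_L T" unfolding radius .
  fix x y :: 'a and f assume h: "x \<noteq> y" "f \<in> duality_set (x - y)"
  have "\<bar>f (T x - T y)\<bar> / (norm (x - y))\<^sup>2 \<le> Sup W"
    by (rule cSup_upper[OF _ bdd]) (use h in \<open>auto simp: W_def\<close>)
  then show "\<bar>f (T x - T y)\<bar> \<le> num_radius_L T * (norm (x - y))\<^sup>2"
    using h unfolding radius by (simp add: divide_le_eq)
qed

text \<open>The numerical radius controls how much s (T p - T q) can shorten p - q: test
  p - q - s (T p - T q) against a functional in D(p - q).\<close>
lemma num_radius_L_lower_bound: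
  fixes T :: "'a::real_normed_vector \<Rightarrow> 'a"
  assumes nonexp: "\<And>x y. norm (T x - T y) \<le> norm (x - y)" and nt: "\<exists>x::'a. x \<noteq> 0"
  shows "(1 - \<bar>s\<bar> * num_radius_L T) * norm (p - q) \<le> norm ((p - q) - s *\<^sub>R (T p - T q))"
proof (cases "p = q")
  case False
  define u where "u = p - q"
  define v where "v = T p - T q"
  define \<omega> where "\<omega> = num_radius_L T"
  have u: "u \<noteq> 0" using False u_def by simp
  obtain f where f: "f \<in> duality_set u" using duality_set_nonempty[OF u] by blast
  interpret f: bounded_linear f using duality_setD(1)[OF f u] .
  have fu: "f u = (norm u)\<^sup>2" using duality_setD(3)[OF f u] .
  have fv: "\<bar>f v\<bar> \<le> \<omega> * (norm u)\<^sup>2"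
    using num_radius_L_bound[OF nonexp nt False] f u_def v_def \<omega>_def by simp
  have "(norm u)\<^sup>2 - \<bar>s\<bar> * (\<omega> * (norm u)\<^sup>2) \<le> f u - s * f v"
  proof -
    have "s * f v \<le> \<bar>s\<bar> * \<bar>f v\<bar>" by (metis abs_ge_self abs_mult)
    also have "\<dots> \<le> \<bar>s\<bar> * (\<omega> * (norm u)\<^sup>2)" using fv by (simp add: mult_left_mono)
    finally show ?thesis using fu by simp
  qed
  also have "f u - s * f v = f (u - s *\<^sub>R v)" by (simp add: f.diff f.scaleR)
  also have "\<dots> \<le> norm u * norm (u - s *\<^sub>R v)"
    using onorm[OF duality_setD(1)[OF f u], of "u - s *\<^sub>R v"] duality_setD(2)[OF f u] by simp
  finally have "norm u * ((1 - \<bar>s\<bar> * \<omega>) * norm u) \<le> norm u * norm (u - s *\<^sub>R v)"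
    by (simp add: power2_eq_square algebra_simps)
  then show ?thesis using u unfolding u_def v_def \<omega>_def by simp
qed simp

section \<open>Consequences of lushness\<close>

lemma infdist_less_obtain:
  assumes "infdist x A < e" "A \<noteq> {}"
  obtains a where "a \<in> A" "dist x a < e"
proof -
  have "(INF a\<in>A. dist x a) < e" using assms infdist_notempty by metis
  moreover have "bdd_below ((\<lambda>a. dist x a) ` A)" by (rule bdd_belowI[of _ 0]) auto
  ultimately show ?thesis using that cINF_less_iff[OF assms(2)] by blast
qed

text \<open>Increments of T measured by a linear functional f are additive along segments,
  so a one-sided bound f (T (p + l c) - T p) \<le> \<beta> l valid for all base points p and
  lengths l \<ge> 0 defines a convex set of directions c.  If |f (T (p + l z) - T p)| \<le> \<beta> l
  for all z in S, this set contains S and -S, hence the absolutely convex hull of S.\<close>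
lemma aco_increment_bound:
  fixes f :: "'a::real_normed_vector \<Rightarrow> real" and T :: "'a \<Rightarrow> 'a"
  assumes f: "bounded_linear f"
    and S: "\<And>z p l. z \<in> S \<Longrightarrow> l > 0 \<Longrightarrow> \<bar>f (T (p + l *\<^sub>R z) - T p)\<bar> \<le> \<beta> * l"
    and c: "c \<in> aco S" and l: "l \<ge> 0"
  shows "f (T (p + l *\<^sub>R c) - T p) \<le> \<beta> * l"
proof -
  interpret f: bounded_linear f by (rule f)
  define H where "H = {c. \<forall>l\<ge>0. \<forall>p. f (T (p + l *\<^sub>R c) - T p) \<le> \<beta> * l}"
  have plus: "S \<subseteq> H"
  proof (clarsimp simp: H_def)
    fix z l p assume "z \<in> S" "(0::real) \<le> l"
    then show "f (T (p + l *\<^sub>R z) - T p) \<le> \<beta> * l"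
      using S[of z l p] by (cases "l = 0") (auto simp: f.zero)
  qed
  have minus: "uminus ` S \<subseteq> H"
  proof (clarsimp simp: H_def)
    fix z l p assume "z \<in> S" "(0::real) \<le> l"
    have "f (T (p - l *\<^sub>R z) - T p) = - f (T ((p - l *\<^sub>R z) + l *\<^sub>R z) - T (p - l *\<^sub>R z))"
      by (simp add: f.diff)
    then show "f (T (p - l *\<^sub>R z) - T p) \<le> \<beta> * l"
      using S[of z l "p - l *\<^sub>R z"] \<open>z \<in> S\<close> \<open>0 \<le> l\<close> by (cases "l = 0") (auto simp: f.zero)
  qed
  have "convex H" unfolding convex_def
  proof (intro ballI allI impI)
    fix c1 c2 and u v :: real
    assume c12: "c1 \<in> H" "c2 \<in> H" and uv: "0 \<le> u" "0 \<le> v" "u + v = 1"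
    show "u *\<^sub>R c1 + v *\<^sub>R c2 \<in> H" unfolding H_def
    proof (intro CollectI allI impI)
      fix l p assume "(l::real) \<ge> 0"
      define m where "m = p + (l * u) *\<^sub>R c1"
      have "p + l *\<^sub>R (u *\<^sub>R c1 + v *\<^sub>R c2) = m + (l * v) *\<^sub>R c2"
        unfolding m_def by (simp add: algebra_simps)
      then have "f (T (p + l *\<^sub>R (u *\<^sub>R c1 + v *\<^sub>R c2)) - T p)
          = f (T (m + (l * v) *\<^sub>R c2) - T m) + f (T m - T p)"
        by (simp add: f.diff)
      also have "\<dots> \<le> \<beta> * (l * v) + \<beta> * (l * u)"
        using c12 \<open>l \<ge> 0\<close> uv unfolding H_def m_def by (intro add_mono) auto
      also have "\<dots> = \<beta> * (l * (u + v))" by (simp add: algebra_simps)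
      also have "\<dots> = \<beta> * l" using uv by simp
      finally show "f (T (p + l *\<^sub>R (u *\<^sub>R c1 + v *\<^sub>R c2)) - T p) \<le> \<beta> * l" .
    qed
  qed
  then have "aco S \<subseteq> H" unfolding aco_def using plus minus by (intro hull_minimal) auto
  then show ?thesis using c l unfolding H_def by blast
qed

lemma lush_homogeneous:
  fixes u v :: "'a::real_normed_vector"
  assumes lush: "lush TYPE('a)" and "u \<noteq> 0" "v \<noteq> 0" "e > 0"
  obtains f c where "f \<in> dual_sphere" "(1 - e) * norm v < f v"
    "c \<in> aco (slice f e)" "norm (norm u *\<^sub>R c - u) < norm u * e"
proof -
  define u1 where "u1 = (1 / norm u) *\<^sub>R u"
  define v1 where "v1 = (1 / norm v) *\<^sub>R v"
  have u1: "u1 \<in> sphere 0 1" and v1: "v1 \<in> sphere 0 1"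
    using assms unfolding u1_def v1_def by auto
  obtain f where f: "f \<in> dual_sphere" "v1 \<in> slice f e" "infdist u1 (aco (slice f e)) < e"
    using lush u1 v1 \<open>e > 0\<close> unfolding lush_def by blast
  interpret f: bounded_linear f using f(1) unfolding dual_sphere_def by simp
  have "v1 \<in> aco (slice f e)" using f(2) unfolding aco_def by (meson UnI1 hull_subset subsetD)
  then obtain c where c: "c \<in> aco (slice f e)" "dist u1 c < e"
    using infdist_less_obtain[OF f(3)] by blast
  have "f v = norm v * f v1" using \<open>v \<noteq> 0\<close> unfolding v1_def by (simp add: f.scaleR)
  moreover have "f v1 > 1 - e" using f(2) unfolding slice_def by simp
  ultimately have "(1 - e) * norm v < f v" using \<open>v \<noteq> 0\<close> by simp
  moreover have "norm (norm u *\<^sub>R c - u) = norm u * dist u1 c"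
  proof -
    have "norm u *\<^sub>R c - u = norm u *\<^sub>R (c - u1)" using \<open>u \<noteq> 0\<close> unfolding u1_def by (simp add: algebra_simps)
    then show ?thesis by (simp add: dist_norm norm_minus_commute)
  qed
  ultimately show ?thesis using that f(1) c \<open>u \<noteq> 0\<close> by simp
qed

text \<open>The geometric content of lushness for Lipschitz maps: if T is nonexpansive and the
  increment T x - T y almost has the length of x - y, then some slice S(f, e) contains a
  direction z along which an increment of T is almost normed by f.  Otherwise
  aco_increment_bound, applied to the point c of lush_homogeneous for u = x - y and
  v = T x - T y, would force f (T x - T y) to be too small.\<close>
lemma lush_large_increment:
  fixes T :: "'a::real_normed_vector \<Rightarrow> 'a"
  assumes lush: "lush TYPE('a)" and nonexp: "\<And>x y. norm (T x - T y) \<le> norm (x - y)"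
    and xy: "x \<noteq> y" "(1 - e) * norm (x - y) < norm (T x - T y)" and e: "0 < e" "e < 1"
  obtains f z p l where "bounded_linear f" "onorm f = 1" "norm z \<le> 1" "f z > 1 - e" "l > 0"
    "\<bar>f (T (p + l *\<^sub>R z) - T p)\<bar> > (1 - 3 * e) * l"
proof -
  define r where "r = norm (x - y)"
  have r: "r > 0" using xy r_def by simp
  have "T x - T y \<noteq> 0" using xy e r r_def by (smt (verit) mult_pos_pos norm_zero)
  then obtain f c where f: "f \<in> dual_sphere" "(1 - e) * norm (T x - T y) < f (T x - T y)"
    and c: "c \<in> aco (slice f e)" "norm (r *\<^sub>R c - (x - y)) < r * e"
    using lush_homogeneous[OF lush, of "x - y" "T x - T y" e] xy(1) e(1) unfolding r_def by auto
  have bl: "bounded_linear f" and on: "onorm f = 1" using f(1) unfolding dual_sphere_def by auto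
  interpret f: bounded_linear f by (rule bl)
  have "\<exists>z p l. z \<in> slice f e \<and> l > 0 \<and> (1 - 3 * e) * l < \<bar>f (T (p + l *\<^sub>R z) - T p)\<bar>"
  proof (rule ccontr)
    assume "\<not> ?thesis"
    then have small: "\<bar>f (T (p + l *\<^sub>R z) - T p)\<bar> \<le> (1 - 3 * e) * l"
      if "z \<in> slice f e" "l > 0" for z p l
      using that by (meson not_less)
    have upper: "f (T (y + r *\<^sub>R c) - T y) \<le> (1 - 3 * e) * r"
      using aco_increment_bound[OF bl small c(1)] r by simp
    have "\<bar>f (T (y + r *\<^sub>R c) - T x)\<bar> < r * e"
    proof -
      have "\<bar>f (T (y + r *\<^sub>R c) - T x)\<bar> \<le> norm (T (y + r *\<^sub>R c) - T x)"
        using onorm[OF bl] on by simp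
      also have "\<dots> \<le> norm ((y + r *\<^sub>R c) - x)" by (rule nonexp)
      also have "(y + r *\<^sub>R c) - x = r *\<^sub>R c - (x - y)" by (simp add: algebra_simps)
      finally show ?thesis using c(2) by simp
    qed
    moreover have "f (T (y + r *\<^sub>R c) - T y) = f (T x - T y) + f (T (y + r *\<^sub>R c) - T x)"
      by (simp add: f.diff)
    moreover have "(1 - e) * r * (1 - e) < (1 - e) * norm (T x - T y)"
      using xy(2) e unfolding r_def by (simp add: mult.commute)
    moreover have "(1 - e) * r * (1 - e) - r * e = (1 - 3 * e) * r + r * e * e"
      by (simp add: algebra_simps)
    moreover have "r * e * e > 0" using r e by simp
    ultimately show False using upper f(2) by linarith
  qed
  then show ?thesis using that[OF bl on] unfolding slice_def by auto
qed

section \<open>The fixed point estimate\<close>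

text \<open>For |s| < 1 the map d' \<mapsto> d + s (T (q + d') - T q) is a contraction of the Banach
  space, so it has a fixed point.\<close>
lemma perturbed_fixed_point:
  fixes T :: "'a::banach \<Rightarrow> 'a"
  assumes nonexp: "\<And>x y. norm (T x - T y) \<le> norm (x - y)" and s: "\<bar>s\<bar> < 1"
  obtains d' where "d' = d + s *\<^sub>R (T (q + d') - T q)"
proof -
  define g where "g d' = d + s *\<^sub>R (T (q + d') - T q)" for d'
  have "\<exists>!d'. g d' = d'"
  proof (rule banach_fix_type[of "\<bar>s\<bar>"])
    show "\<forall>x y. dist (g x) (g y) \<le> \<bar>s\<bar> * dist x y"
    proof (intro allI)
      fix x y
      have "g x - g y = s *\<^sub>R (T (q + x) - T (q + y))" unfolding g_def by (simp add: algebra_simps)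
      then have "dist (g x) (g y) = \<bar>s\<bar> * norm (T (q + x) - T (q + y))" by (simp add: dist_norm)
      also have "\<dots> \<le> \<bar>s\<bar> * norm ((q + x) - (q + y))"
        using nonexp[of "q + x" "q + y"] by (simp add: mult_left_mono)
      finally show "dist (g x) (g y) \<le> \<bar>s\<bar> * dist x y" by (simp add: dist_norm)
    qed
  qed (use s in auto)
  then show ?thesis using that unfolding g_def by metis
qed

text \<open>Let the increment D = T (p + l z) - T p along a direction z of the slice S(f, e) be
  almost normed by f, and let d' solve d' = l z + s (T (p + d') - T p), with s = \<plusminus>t chosen
  so that s f D = t |f D|.  Expanding f d' and using f d' \<le> \<parallel>d'\<parallel> gives a lower bound
  for \<parallel>d'\<parallel> in terms of l.\<close>
lemma fixed_point_lower_estimate: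
  fixes T :: "'a::banach \<Rightarrow> 'a"
  assumes nonexp: "\<And>x y. norm (T x - T y) \<le> norm (x - y)"
    and f: "bounded_linear f" "onorm f = 1"
    and z: "f z > 1 - e" and l: "l > 0"
    and D: "\<bar>f (T (p + l *\<^sub>R z) - T p)\<bar> > (1 - 3 * e) * l"
    and t: "0 \<le> t" "t < 1"
  obtains s d' where "\<bar>s\<bar> = t" "d' = l *\<^sub>R z + s *\<^sub>R (T (p + d') - T p)"
    "l * ((1 - e) + t * (1 - 3 * e)) \<le> (1 + t\<^sup>2) * norm d'"
proof -
  interpret f: bounded_linear f by (rule f(1))
  have f_le: "\<bar>f x\<bar> \<le> norm x" for x using onorm[OF f(1)] f(2) by simp
  define d where "d = l *\<^sub>R z"
  define D where "D = T (p + d) - T p"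
  define s where "s = (if f D \<ge> 0 then t else - t)"
  have s: "\<bar>s\<bar> = t" "s * f D = t * \<bar>f D\<bar>" using t unfolding s_def by auto
  obtain d' where d': "d' = d + s *\<^sub>R (T (p + d') - T p)"
    using perturbed_fixed_point[OF nonexp] s t by metis
  define N where "N = norm d'"
  have error: "\<bar>s * f (T (p + d') - T (p + d))\<bar> \<le> t * (t * N)"
  proof -
    have "\<bar>f (T (p + d') - T (p + d))\<bar> \<le> norm (d' - d)"
      using f_le order_trans nonexp[of "p + d'" "p + d"] by fastforce
    also have "d' - d = s *\<^sub>R (T (p + d') - T p)" using d' by (metis add_diff_cancel_left')
    also have "norm \<dots> \<le> t * N"
      using s nonexp[of "p + d'" p] t unfolding N_def by (simp add: mult_left_mono)
    finally show ?thesis using s t by (simp add: abs_mult mult_left_mono)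
  qed
  have "f d' = f d + s * f D + s * f (T (p + d') - T (p + d))"
  proof -
    have "d' = d + s *\<^sub>R D + s *\<^sub>R (T (p + d') - T (p + d))"
      using d' unfolding D_def by (simp add: algebra_simps)
    then show ?thesis by (metis f.add f.scaleR real_scaleR_def)
  qed
  moreover have "f d \<ge> l * (1 - e)" unfolding d_def using z l by (simp add: f.scaleR)
  moreover have "t * \<bar>f D\<bar> \<ge> t * ((1 - 3 * e) * l)"
    using D t unfolding D_def d_def by (simp add: mult_left_mono)
  moreover have "f d' \<le> N" using f_le[of d'] unfolding N_def by simp
  ultimately have "l * ((1 - e) + t * (1 - 3 * e)) \<le> (1 + t\<^sup>2) * N"
    using s error by (simp add: algebra_simps power2_eq_square)
  then show ?thesis using that s(1) d' unfolding d_def N_def by blast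
qed

text \<open>The central estimate: the numerical radius \<omega> bounds the fixed point d' of
  fixed_point_lower_estimate from above, (1 - t \<omega>) \<parallel>d'\<parallel> \<le> \<parallel>l z\<parallel> \<le> l, and comparing
  with the lower bound eliminates \<parallel>d'\<parallel> and l.\<close>
lemma increment_estimate:
  fixes T :: "'a::banach \<Rightarrow> 'a"
  assumes nonexp: "\<And>x y. norm (T x - T y) \<le> norm (x - y)" and nt: "\<exists>x::'a. x \<noteq> 0"
    and f: "bounded_linear f" "onorm f = 1"
    and z: "norm z \<le> 1" "f z > 1 - e" and l: "l > 0"
    and D: "\<bar>f (T (p + l *\<^sub>R z) - T p)\<bar> > (1 - 3 * e) * l"
    and t: "0 \<le> t" "t < 1" "t * num_radius_L T \<le> 1"
  shows "(1 - t * num_radius_L T) * ((1 - e) + t * (1 - 3 * e)) \<le> 1 + t\<^sup>2"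
proof -
  define \<omega> where "\<omega> = num_radius_L T"
  obtain s d' where s: "\<bar>s\<bar> = t" and d': "d' = l *\<^sub>R z + s *\<^sub>R (T (p + d') - T p)"
    and lower: "l * ((1 - e) + t * (1 - 3 * e)) \<le> (1 + t\<^sup>2) * norm d'"
    by (rule fixed_point_lower_estimate[OF nonexp f z(2) l D t(1,2)])
  have upper: "(1 - t * \<omega>) * norm d' \<le> l"
  proof -
    have "(1 - \<bar>s\<bar> * \<omega>) * norm ((p + d') - p) \<le> norm (((p + d') - p) - s *\<^sub>R (T (p + d') - T p))"
      unfolding \<omega>_def by (rule num_radius_L_lower_bound[OF nonexp nt])
    also have "((p + d') - p) - s *\<^sub>R (T (p + d') - T p) = l *\<^sub>R z"
      using d' by (simp add: algebra_simps)
    also have "norm (l *\<^sub>R z) \<le> l" using z(1) l by (simp add: mult_left_le)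
    finally show ?thesis using s by simp
  qed
  have "(1 - t * \<omega>) * (l * ((1 - e) + t * (1 - 3 * e))) \<le> (1 - t * \<omega>) * ((1 + t\<^sup>2) * norm d')"
    using lower t \<omega>_def by (intro mult_left_mono) auto
  also have "\<dots> = (1 + t\<^sup>2) * ((1 - t * \<omega>) * norm d')" by simp
  also have "\<dots> \<le> (1 + t\<^sup>2) * l" using upper by (intro mult_left_mono) auto
  finally have "l * ((1 - t * \<omega>) * ((1 - e) + t * (1 - 3 * e))) \<le> l * (1 + t\<^sup>2)"
    by (simp add: algebra_simps)
  then show ?thesis using l unfolding \<omega>_def by simp
qed

text \<open>The estimate of increment_estimate fails for \<omega> < 1, t = (1 - \<omega>)/4 and e = t^2/8:
  the left-hand side then exceeds 1 + t^2 by at least t^2 (3 - \<omega>) - 2e > 0.\<close>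
lemma increment_estimate_violated:
  fixes \<omega> t e :: real
  assumes \<omega>: "0 \<le> \<omega>" "\<omega> < 1" and t_def: "t = (1 - \<omega>) / 4" and e_def: "e = t\<^sup>2 / 8"
  shows "1 + t\<^sup>2 < (1 - t * \<omega>) * ((1 - e) + t * (1 - 3 * e))"
proof -
  have t: "0 < t" "t \<le> 1/4" using \<omega> unfolding t_def by auto
  have t\<omega>: "0 \<le> t * \<omega>" "t * \<omega> \<le> t"
    using t \<omega> by (simp_all add: mult_left_le)
  have "t * (1 - \<omega>) = 4 * t\<^sup>2" unfolding t_def by (simp add: power2_eq_square)
  then have expand: "(1 - t * \<omega>) * ((1 - e) + t * (1 - 3 * e))
      = 1 + t\<^sup>2 + t\<^sup>2 * (3 - \<omega>) - e * ((1 + 3 * t) * (1 - t * \<omega>))"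
    by (simp add: algebra_simps power2_eq_square)
  have "(1 + 3 * t) * (1 - t * \<omega>) \<le> 2 * 1"
    using t t\<omega> by (intro mult_mono) linarith+
  then have "e * ((1 + 3 * t) * (1 - t * \<omega>)) \<le> e * 2"
    unfolding e_def by (intro mult_left_mono) auto
  moreover have "t\<^sup>2 * 2 \<le> t\<^sup>2 * (3 - \<omega>)" using \<omega> by (intro mult_left_mono) auto
  moreover have "e * 2 < t\<^sup>2 * 2" using t unfolding e_def by simp
  ultimately show ?thesis unfolding expand by linarith
qed

lemma lush_num_radius_L_eq_1:
  fixes T :: "'a::banach \<Rightarrow> 'a"
  assumes lush: "lush TYPE('a)" and nt: "\<exists>x::'a. x \<noteq> 0"
    and Lip: "T \<in> Lip0" "lip_norm T = 1"
  shows "num_radius_L T = 1"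
proof (rule ccontr)
  define \<omega> where "\<omega> = num_radius_L T"
  define t where "t = (1 - \<omega>) / 4"
  define e where "e = t\<^sup>2 / 8"
  have nonexp: "\<And>x y. norm (T x - T y) \<le> norm (x - y)"
    using lip_norm_one_nonexpansive[OF Lip] .
  have "\<omega> \<le> 1" "0 \<le> \<omega>"
    unfolding \<omega>_def using num_radius_L_le_1[OF nonexp nt] num_radius_L_nonneg[OF nonexp nt] .
  moreover assume "num_radius_L T \<noteq> 1"
  ultimately have \<omega>: "0 \<le> \<omega>" "\<omega> < 1" unfolding \<omega>_def by auto
  then have t: "0 < t" "t < 1" unfolding t_def by auto
  have t\<omega>: "t * \<omega> \<le> 1" using t \<omega> mult_left_le[of \<omega> t] by linarith
  have "t * t < 1 * 1" by (rule mult_strict_mono) (use t in linarith)+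
  then have e: "0 < e" "e < 1" unfolding e_def using t by (auto simp: power2_eq_square)
  obtain x y where xy: "x \<noteq> y" "(1 - e) * norm (x - y) < norm (T x - T y)"
    by (rule lip_norm_one_almost_attained[OF Lip(2) nt e(1)])
  obtain f z p l where "bounded_linear f" "onorm f = 1" "norm z \<le> 1" "f z > 1 - e" "l > 0"
    "\<bar>f (T (p + l *\<^sub>R z) - T p)\<bar> > (1 - 3 * e) * l"
    by (rule lush_large_increment[OF lush nonexp xy e])
  from increment_estimate[OF nonexp nt this] t t\<omega>
  have "(1 - t * \<omega>) * ((1 - e) + t * (1 - 3 * e)) \<le> 1 + t\<^sup>2" unfolding \<omega>_def by simp
  then show False
    using increment_estimate_violated[OF \<omega> t_def e_def] by linarith
qed

text \<open>The identity attains the value 1, so the infimum is over the set {1}.\<close>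
lemma identity_Lip0:
  assumes "\<exists>x::'a::real_normed_vector. x \<noteq> 0"
  shows "(\<lambda>x::'a. x) \<in> Lip0" "lip_norm (\<lambda>x::'a. x) = 1"
proof -
  show "(\<lambda>x::'a. x) \<in> Lip0" unfolding Lip0_def by (auto intro!: exI[of _ 1] lipschitz_onI)
  obtain x0 :: 'a where "x0 \<noteq> 0" using assms by blast
  then have "{norm (x - y) / norm (x - y) | x y :: 'a. x \<noteq> y} = {1}" by auto
  then show "lip_norm (\<lambda>x::'a. x) = 1" unfolding lip_norm_def by simp
qed

theorem theorem2p7:
  assumes nontriv: "\<exists>x::'a::banach. x \<noteq> 0"
    and "lush TYPE('a)"
  shows "lip_num_index TYPE('a) = 1"
proof -
  have "{num_radius_L T | T :: 'a \<Rightarrow> 'a. T \<in> Lip0 \<and> lip_norm T = 1} = {1}"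
  proof
    show "{num_radius_L T | T :: 'a \<Rightarrow> 'a. T \<in> Lip0 \<and> lip_norm T = 1} \<subseteq> {1}"
      using lush_num_radius_L_eq_1[OF assms(2) nontriv] by auto
    show "{1} \<subseteq> {num_radius_L T | T :: 'a \<Rightarrow> 'a. T \<in> Lip0 \<and> lip_norm T = 1}"
      using lush_num_radius_L_eq_1[OF assms(2) nontriv] identity_Lip0[OF nontriv] by force
  qed
  then show ?thesis unfolding lip_num_index_def by simp
qed

end
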